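(* Let $\mathcal{S}$ be a relational schema, $\mathit{IC}$ a finite set of universal integrity constraints of the form $\forall \bar{x}(\bigwedge_{i=1}^{m} P_i(\bar{x}_i) \rightarrow \bigvee_{j=1}^{n} Q_j(\bar{y}_j) \vee \varphi)$, and $D$ a database instance (without nulls). Then the second-order sentence $\Phi(\Pi(\mathit{IC},D))$ associated to the repair program is logically equivalent to $$\mathcal{R}(D) \wedge \bigwedge_{P\in\mathcal{S}}\forall\bar x\big((P(\bar x)\vee P_{\mathbf{t}}(\bar x))\equiv P_\star(\bar x)\big)\wedge\bigwedge_{P\in\mathcal{S}}\forall\bar x\big((P_\star(\bar x)\wedge\neg P_{\mathbf{f}}(\bar x))\equiv P_{\star\star}(\bar x)\big)\wedge\bigwedge_{P\in\mathcal{S}}\forall\bar x\,\neg(P_{\mathbf{t}}(\bar x)\wedge P_{\mathbf{f}}(\bar x))\wedge \mathit{Circ}\big(\Theta;\{P_{\mathbf{t}},P_{\mathbf{f}}\mid P\in\mathcal{S}\};\{P_\star\mid P\in\mathcal{S}\}\big),$$ where $\Theta$ is the conjunction of the rules of types (1)–(3) of the repair program, each viewed as a first-order sentence, and $\mathit{Circ}$ denotes parallel circumscription.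
   Context: Repair program $\Pi(\mathit{IC},D)$: for each $P\in\mathcal{S}$ of arity $k$ there are new $k$-ary predicates $P_{\mathbf{t}}, P_{\mathbf{f}}, P_{\star}, P_{\star\star}$. Rules: (1) a fact $P(\bar a)$ for each $P(\bar a)\in D$; (2) for each constraint and each partition $Q'\cup Q''=\{Q_1,\ldots,Q_n\}$, $Q'\cap Q''=\emptyset$, the rule $\bigvee_{i=1}^m P_{i,\mathbf{f}}(\bar{x}_i)\vee\bigvee_{j=1}^n Q_{j,\mathbf{t}}(\bar y_j)\leftarrow \bigwedge_{i=1}^m P_{i,\star}(\bar x_i), \bigwedge_{Q_j\in Q'}Q_{j,\mathbf{f}}(\bar y_j), \bigwedge_{Q_k\in Q''}\mathit{not}\,Q_k(\bar y_k), \bar\varphi$, with $\bar\varphi$ a conjunction of built-ins equivalent to $\neg\varphi$; (3) $P_\star(\bar x)\leftarrow P(\bar x)$ and $P_\star(\bar x)\leftarrow P_{\mathbf{t}}(\bar x)$; (4) $P_{\star\star}(\bar x)\leftarrow P_\star(\bar x),\mathit{not}\,P_{\mathbf{f}}(\bar x)$; (5) program constraint $\leftarrow P_{\mathbf{t}}(\bar x),P_{\mathbf{f}}(\bar x)$. A rule is viewed as a first-order sentence by replacing commas with $\wedge$, $\mathit{not}$ with $\neg$, turning $\mathit{Head}\leftarrow\mathit{Body}$ into $\mathit{Body}\rightarrow\mathit{Head}$ and taking the universal closure; a constraint $\leftarrow B$ becomes $\neg B$. For a program $\Pi$, $\psi(\Pi)$ is the conjunction of these sentences. The SO sentence is $\Phi(\Pi):=\psi\wedge\neg\exists\bar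 X((\bar X<\bar P)\wedge\psi^\circ(\bar X))$, where $\bar P=(P_1,\ldots,P_n)$ lists the (non-built-in) predicates of $\psi$, $\bar X=(X^{P_1},\ldots,X^{P_n})$ are predicate variables of matching arities, $\bar X<\bar P$ means $\bigwedge_i\forall\bar x(X^{P_i}(\bar x)\rightarrow P_i(\bar x))\wedge\bigvee_i\exists\bar x(P_i(\bar x)\wedge\neg X^{P_i}(\bar x))$, and $\psi^\circ$ is defined recursively (with $\neg\chi$ written as $\chi\rightarrow\bot$): $P_i(\bar t)^\circ=X^{P_i}(\bar t)$; $(t_1=t_2)^\circ=(t_1=t_2)$ (built-ins unchanged); $\bot^\circ=\bot$; $(F\odot G)^\circ=F^\circ\odot G^\circ$ for $\odot\in\{\wedge,\vee\}$; $(F\rightarrow G)^\circ=(F^\circ\rightarrow G^\circ)\wedge(F\rightarrow G)$; $(\mathsf{Q}xF)^\circ=\mathsf{Q}xF^\circ$ for $\mathsf{Q}\in\{\forall,\exists\}$. The Herbrand models of $\Phi(\Pi)$ are the stable models of $\Pi$. $\mathcal{R}(D)$ (Reiter's reconstruction) is the conjunction of: the domain closure axiom $\forall x\bigvee_{c}x=c$ over the (active) domain constants; the unique names axioms $c\neq c'$ for distinct constants; and for each $P\in\mathcal{S}$ the completion $\forall\bar x(P(\bar x)\equiv\bigvee_{P(\bar a)\in D}\bar x=\bar a)$ (with empty disjunction $\bot$). Parallel circumscription: $\mathit{Circ}(\Sigma(\bar P,\bar Q);\bar P;\bar Q):=\Sigma(\bar P,\bar Q)\wedge\neg\exists\bar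 X\bar Y(\Sigma(\bar X,\bar Y)\wedge\bar X\le\bar P\wedge\bar X\neq\bar P)$, where $\bar X\le\bar P$ means $\bigwedge_i\forall\bar x(X_i(\bar x)\rightarrow P_i(\bar x))$; the predicates in $\bar Q$ vary, all others are fixed. *)

theory Defs
  imports Main
begin

datatype 'c trm = Var nat | Cst 'c

datatype ('r, 'b, 'c) fm =
    Atom 'r "'c trm list"
  | Eq "'c trm" "'c trm"
  | BI 'b "'c trm list"
  | Bot
  | Conj "('r,'b,'c) fm" "('r,'b,'c) fm"
  | Disj "('r,'b,'c) fm" "('r,'b,'c) fm"
  | Imp "('r,'b,'c) fm" "('r,'b,'c) fm"
  | All nat "('r,'b,'c) fm"
  | Ex nat "('r,'b,'c) fm"

definition Neg :: "('r,'b,'c) fm \<Rightarrow> ('r,'b,'c) fm" where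
  "Neg F = Imp F Bot"

definition Top :: "('r,'b,'c) fm" where
  "Top = Imp Bot Bot"

definition Iff :: "('r,'b,'c) fm \<Rightarrow> ('r,'b,'c) fm \<Rightarrow> ('r,'b,'c) fm" where
  "Iff F G = Conj (Imp F G) (Imp G F)"

fun conj_list :: "('r,'b,'c) fm list \<Rightarrow> ('r,'b,'c) fm" where
  "conj_list [] = Top"
| "conj_list [F] = F"
| "conj_list (F # Fs) = Conj F (conj_list Fs)"

fun disj_list :: "('r,'b,'c) fm list \<Rightarrow> ('r,'b,'c) fm" where
  "disj_list [] = Bot"
| "disj_list [F] = F"
| "disj_list (F # Fs) = Disj F (disj_list Fs)"

fun tvars :: "'c trm \<Rightarrow> nat set" where
  "tvars (Var n) = {n}"
| "tvars (Cst c) = {}"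

fun fv :: "('r,'b,'c) fm \<Rightarrow> nat set" where
  "fv (Atom P ts) = \<Union> (tvars ` set ts)"
| "fv (Eq t u) = tvars t \<union> tvars u"
| "fv (BI b ts) = \<Union> (tvars ` set ts)"
| "fv Bot = {}"
| "fv (Conj F G) = fv F \<union> fv G"
| "fv (Disj F G) = fv F \<union> fv G"
| "fv (Imp F G) = fv F \<union> fv G"
| "fv (All x F) = fv F - {x}"
| "fv (Ex x F) = fv F - {x}"

definition univ_close :: "('r,'b,'c) fm \<Rightarrow> ('r,'b,'c) fm" where
  "univ_close F = foldr All (sorted_list_of_set (fv F)) F"

definition xs :: "nat \<Rightarrow> 'c trm list" where
  "xs k = map Var [0..<k]"

definition all_tuple :: "nat \<Rightarrow> ('r,'b,'c) fm \<Rightarrow> ('r,'b,'c) fm" where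
  "all_tuple k F = foldr All [0..<k] F"

definition ex_tuple :: "nat \<Rightarrow> ('r,'b,'c) fm \<Rightarrow> ('r,'b,'c) fm" where
  "ex_tuple k F = foldr Ex [0..<k] F"

fun ren :: "('r \<Rightarrow> 's) \<Rightarrow> ('r,'b,'c) fm \<Rightarrow> ('s,'b,'c) fm" where
  "ren f (Atom P ts) = Atom (f P) ts"
| "ren f (Eq t u) = Eq t u"
| "ren f (BI b ts) = BI b ts"
| "ren f Bot = Bot"
| "ren f (Conj F G) = Conj (ren f F) (ren f G)"
| "ren f (Disj F G) = Disj (ren f F) (ren f G)"
| "ren f (Imp F G) = Imp (ren f F) (ren f G)"
| "ren f (All x F) = All x (ren f F)"
| "ren f (Ex x F) = Ex x (ren f F)"

section \<open>Semantics: Herbrand structures whose universe is the set of constants 'c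
  (constants denote themselves, so unique names hold); built-ins have a fixed
  interpretation B; = is true equality.\<close>

fun tval :: "(nat \<Rightarrow> 'c) \<Rightarrow> 'c trm \<Rightarrow> 'c" where
  "tval v (Var n) = v n"
| "tval v (Cst c) = c"

fun eval :: "('r \<Rightarrow> 'c list \<Rightarrow> bool) \<Rightarrow> ('b \<Rightarrow> 'c list \<Rightarrow> bool) \<Rightarrow> (nat \<Rightarrow> 'c)
              \<Rightarrow> ('r,'b,'c) fm \<Rightarrow> bool" where
  "eval I B v (Atom P ts) = I P (map (tval v) ts)"
| "eval I B v (Eq t u) = (tval v t = tval v u)"
| "eval I B v (BI b ts) = B b (map (tval v) ts)"
| "eval I B v Bot = False"
| "eval I B v (Conj F G) = (eval I B v F \<and> eval I B v G)"
| "eval I B v (Disj F G) = (eval I B v F \<or> eval I B v G)"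
| "eval I B v (Imp F G) = (eval I B v F \<longrightarrow> eval I B v G)"
| "eval I B v (All x F) = (\<forall>a. eval I B (v(x := a)) F)"
| "eval I B v (Ex x F) = (\<exists>a. eval I B (v(x := a)) F)"

definition holds :: "('r \<Rightarrow> 'c list \<Rightarrow> bool) \<Rightarrow> ('b \<Rightarrow> 'c list \<Rightarrow> bool) \<Rightarrow> ('r,'b,'c) fm \<Rightarrow> bool" where
  "holds I B F = (\<forall>v. eval I B v F)"

text \<open>Predicates of the repair program: P, P_t, P_f, P_star, P_starstar.\<close>
datatype 'p rp = Orig 'p | PT 'p | PF 'p | PS 'p | PSS 'p

fun base :: "'p rp \<Rightarrow> 'p" where
  "base (Orig P) = P" | "base (PT P) = P" | "base (PF P) = P" | "base (PS P) = P" | "base (PSS P) = P"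

text \<open>Built-in atoms and literals; phi is a disjunction of built-in literals
  (True = positive literal).\<close>
datatype ('b, 'c) batom = BEq "'c trm" "'c trm" | BRel 'b "'c trm list"

fun batom_fm :: "('b,'c) batom \<Rightarrow> ('r,'b,'c) fm" where
  "batom_fm (BEq t u) = Eq t u"
| "batom_fm (BRel b ts) = BI b ts"

text \<open>The complement of a built-in literal (conjunction of these is phi-bar, equivalent to not phi).\<close>
fun bneg :: "bool \<times> ('b,'c) batom \<Rightarrow> ('r,'b,'c) fm" where
  "bneg (True, a) = Neg (batom_fm a)"
| "bneg (False, a) = batom_fm a"

text \<open>Universal constraint  forall x (/\ P_i(x_i) --> \/ Q_j(y_j) \/ phi).\<close>
datatype ('p, 'b, 'c) ucon =
  UC (ante: "('p \<times> nat list) list") (cons: "('p \<times> nat list) list")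
     (phi: "(bool \<times> ('b,'c) batom) list")

definition vs :: "nat list \<Rightarrow> 'c trm list" where
  "vs x = map Var x"

definition facts :: "('p \<times> 'c list) list \<Rightarrow> ('p rp,'b,'c) fm list" where
  "facts D = map (\<lambda>f. Atom (Orig (fst f)) (map Cst (snd f))) D"

definition rule2 :: "('p,'b,'c) ucon \<Rightarrow> bool list \<Rightarrow> ('p rp,'b,'c) fm" where
  "rule2 c bs =
     (let qs = zip (cons c) bs;
          body = map (\<lambda>a. Atom (PS (fst a)) (vs (snd a))) (ante c)
               @ [Atom (PF (fst (fst q))) (vs (snd (fst q))). q \<leftarrow> qs, snd q]
               @ [Neg (Atom (Orig (fst (fst q))) (vs (snd (fst q)))). q \<leftarrow> qs, \<not> snd q]
               @ map bneg (phi c);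
          head = map (\<lambda>a. Atom (PF (fst a)) (vs (snd a))) (ante c)
               @ map (\<lambda>a. Atom (PT (fst a)) (vs (snd a))) (cons c)
      in univ_close (Imp (conj_list body) (disj_list head)))"

text \<open>One rule for each constraint and each partition Q' (marked True) / Q'' (marked False).\<close>
definition rules2 :: "('p,'b,'c) ucon list \<Rightarrow> ('p rp,'b,'c) fm list" where
  "rules2 IC = concat (map (\<lambda>c. map (rule2 c) (List.n_lists (length (cons c)) [True, False])) IC)"

definition rules3 :: "('p \<Rightarrow> nat) \<Rightarrow> 'p list \<Rightarrow> ('p rp,'b,'c) fm list" where
  "rules3 ar S = concat (map (\<lambda>P.
     [univ_close (Imp (conj_list [Atom (Orig P) (xs (ar P))]) (Atom (PS P) (xs (ar P)))),
      univ_close (Imp (conj_list [Atom (PT P) (xs (ar P))]) (Atom (PS P) (xs (ar P))))]) S)"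

definition rules4 :: "('p \<Rightarrow> nat) \<Rightarrow> 'p list \<Rightarrow> ('p rp,'b,'c) fm list" where
  "rules4 ar S = map (\<lambda>P.
     univ_close (Imp (conj_list [Atom (PS P) (xs (ar P)), Neg (Atom (PF P) (xs (ar P)))])
                     (Atom (PSS P) (xs (ar P))))) S"

definition rules5 :: "('p \<Rightarrow> nat) \<Rightarrow> 'p list \<Rightarrow> ('p rp,'b,'c) fm list" where
  "rules5 ar S = map (\<lambda>P.
     univ_close (Neg (conj_list [Atom (PT P) (xs (ar P)), Atom (PF P) (xs (ar P))]))) S"

text \<open>psi(Pi(IC,D)) and Theta (rules of types (1)-(3)).\<close>
definition psi :: "('p \<Rightarrow> nat) \<Rightarrow> 'p list \<Rightarrow> ('p,'b,'c) ucon list \<Rightarrow> ('p \<times> 'c list) list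
                     \<Rightarrow> ('p rp,'b,'c) fm" where
  "psi ar S IC D = conj_list (facts D @ rules2 IC @ rules3 ar S @ rules4 ar S @ rules5 ar S)"

definition Theta :: "('p \<Rightarrow> nat) \<Rightarrow> 'p list \<Rightarrow> ('p,'b,'c) ucon list \<Rightarrow> ('p \<times> 'c list) list
                     \<Rightarrow> ('p rp,'b,'c) fm" where
  "Theta ar S IC D = conj_list (facts D @ rules2 IC @ rules3 ar S)"

definition preds :: "'p list \<Rightarrow> 'p rp list" where
  "preds S = concat (map (\<lambda>P. [Orig P, PT P, PF P, PS P, PSS P]) S)"

text \<open>psi-circle; atoms over Inl are the original predicates, over Inr the predicate variables X.\<close>
fun circ :: "('r,'b,'c) fm \<Rightarrow> ('r + 'r,'b,'c) fm" where
  "circ (Atom P ts) = Atom (Inr P) ts"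
| "circ (Eq t u) = Eq t u"
| "circ (BI b ts) = BI b ts"
| "circ Bot = Bot"
| "circ (Conj F G) = Conj (circ F) (circ G)"
| "circ (Disj F G) = Disj (circ F) (circ G)"
| "circ (Imp F G) = Conj (Imp (circ F) (circ G)) (ren Inl (Imp F G))"
| "circ (All x F) = All x (circ F)"
| "circ (Ex x F) = Ex x (circ F)"

definition le_fm :: "('r \<Rightarrow> nat) \<Rightarrow> 'r list \<Rightarrow> ('r + 'r,'b,'c) fm" where
  "le_fm ar ps = conj_list (map (\<lambda>p. all_tuple (ar p)
       (Imp (Atom (Inr p) (xs (ar p))) (Atom (Inl p) (xs (ar p))))) ps)"

definition eq_fm :: "('r \<Rightarrow> nat) \<Rightarrow> 'r list \<Rightarrow> ('r + 'r,'b,'c) fm" where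
  "eq_fm ar ps = conj_list (map (\<lambda>p. all_tuple (ar p)
       (Iff (Atom (Inr p) (xs (ar p))) (Atom (Inl p) (xs (ar p))))) ps)"

definition less_fm :: "('r \<Rightarrow> nat) \<Rightarrow> 'r list \<Rightarrow> ('r + 'r,'b,'c) fm" where
  "less_fm ar ps = Conj (le_fm ar ps)
     (disj_list (map (\<lambda>p. ex_tuple (ar p)
       (Conj (Atom (Inl p) (xs (ar p))) (Neg (Atom (Inr p) (xs (ar p)))))) ps))"

definition rar :: "('p \<Rightarrow> nat) \<Rightarrow> 'p rp \<Rightarrow> nat" where
  "rar ar r = ar (base r)"

text \<open>Truth of Phi(Pi(IC,D)) in the structure I; the second-order quantifier over
  X-bar is the HOL quantifier over X.\<close>
definition Phi_holds :: "('p \<Rightarrow> nat) \<Rightarrow> 'p list \<Rightarrow> ('p,'b,'c) ucon list \<Rightarrow> ('p \<times> 'c list) list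
     \<Rightarrow> ('b \<Rightarrow> 'c list \<Rightarrow> bool) \<Rightarrow> ('p rp \<Rightarrow> 'c list \<Rightarrow> bool) \<Rightarrow> bool" where
  "Phi_holds ar S IC D B I =
     (holds I B (psi ar S IC D) \<and>
      \<not> (\<exists>X. holds (case_sum I X) B
               (Conj (less_fm (rar ar) (preds S)) (circ (psi ar S IC D)))))"

text \<open>Circ(Sg; Ps; Qs): Ps minimised, Qs varying, others fixed.  The predicate
  variables X-bar, Y-bar are the values of Z at Ps and Qs.\<close>
definition Circ_holds :: "('r \<Rightarrow> nat) \<Rightarrow> ('b \<Rightarrow> 'c list \<Rightarrow> bool) \<Rightarrow> ('r \<Rightarrow> 'c list \<Rightarrow> bool)
     \<Rightarrow> ('r,'b,'c) fm \<Rightarrow> 'r list \<Rightarrow> 'r list \<Rightarrow> bool" where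
  "Circ_holds ar B I Sg Ps Qs =
     (holds I B Sg \<and>
      \<not> (\<exists>Z. holds (case_sum I Z) B
               (Conj (ren (\<lambda>r. if r \<in> set Ps \<union> set Qs then Inr r else Inl r) Sg)
                 (Conj (le_fm ar Ps) (Neg (eq_fm ar Ps))))))"

definition R_fm :: "('p \<Rightarrow> nat) \<Rightarrow> 'p list \<Rightarrow> ('p \<times> ('c::enum) list) list \<Rightarrow> ('p rp,'b,'c) fm" where
  "R_fm ar S D =
     Conj (All 0 (disj_list (map (\<lambda>c. Eq (Var 0) (Cst c)) Enum.enum)))
     (Conj (conj_list [Neg (Eq (Cst c) (Cst d)). c \<leftarrow> Enum.enum, d \<leftarrow> Enum.enum, c \<noteq> d])
       (conj_list (map (\<lambda>P. all_tuple (ar P)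
           (Iff (Atom (Orig P) (xs (ar P)))
                (disj_list [conj_list (map (\<lambda>i. Eq (Var i) (Cst (snd f ! i))) [0..<ar P]).
                            f \<leftarrow> D, fst f = P]))) S)))"

definition RHS_holds :: "('p \<Rightarrow> nat) \<Rightarrow> 'p list \<Rightarrow> ('p,'b,'c::enum) ucon list \<Rightarrow> ('p \<times> 'c list) list
     \<Rightarrow> ('b \<Rightarrow> 'c list \<Rightarrow> bool) \<Rightarrow> ('p rp \<Rightarrow> 'c list \<Rightarrow> bool) \<Rightarrow> bool" where
  "RHS_holds ar S IC D B I =
     (holds I B (Conj (R_fm ar S D)
        (Conj (conj_list (map (\<lambda>P. all_tuple (ar P)
                 (Iff (Disj (Atom (Orig P) (xs (ar P))) (Atom (PT P) (xs (ar P))))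
                      (Atom (PS P) (xs (ar P))))) S))
        (Conj (conj_list (map (\<lambda>P. all_tuple (ar P)
                 (Iff (Conj (Atom (PS P) (xs (ar P))) (Neg (Atom (PF P) (xs (ar P)))))
                      (Atom (PSS P) (xs (ar P))))) S))
              (conj_list (map (\<lambda>P. all_tuple (ar P)
                 (Neg (Conj (Atom (PT P) (xs (ar P))) (Atom (PF P) (xs (ar P)))))) S)))))
      \<and> Circ_holds (rar ar) B I (Theta ar S IC D)
          (concat (map (\<lambda>P. [PT P, PF P]) S)) (map PS S))"

definition wf_db :: "('p \<Rightarrow> nat) \<Rightarrow> 'p list \<Rightarrow> ('p \<times> 'c list) list \<Rightarrow> bool" where
  "wf_db ar S D = (\<forall>f \<in> set D. fst f \<in> set S \<and> length (snd f) = ar (fst f))"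

definition wf_ic :: "('p \<Rightarrow> nat) \<Rightarrow> 'p list \<Rightarrow> ('p,'b,'c) ucon list \<Rightarrow> bool" where
  "wf_ic ar S IC = (\<forall>c \<in> set IC. \<forall>a \<in> set (ante c @ cons c).
                       fst a \<in> set S \<and> length (snd a) = ar (fst a))"

end

theory Submission
  imports Defs
begin

text \<open>
  \<open>\<Phi>(\<Pi>)\<close> says that \<open>I\<close> is a model of \<open>\<psi>\<close> and that no \<open>X < I\<close> is a model of the
  \<open>X\<close>-half of \<open>\<psi>\<^sup>\<circ>\<close>, which is \<open>\<psi>\<close> with its negated atoms read in \<open>I\<close>: \<open>I\<close> is a stable model.
  In a stable model every atom of \<open>P\<close>, \<open>P\<^sub>\<star>\<close> and \<open>P\<^sub>\<star>\<^sub>\<star>\<close> is supported by a rule of type (1),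
  (3) or (4), since deleting an unsupported atom leaves a smaller model of the reduct; this gives
  Reiter's completion of \<open>D\<close> and the equivalences defining \<open>P\<^sub>\<star>\<close> and \<open>P\<^sub>\<star>\<^sub>\<star>\<close>.  A competitor \<open>Z\<close>
  of the circumscription, cut down below \<open>I\<close> and with \<open>P\<^sub>\<star>\<close> recomputed by rule (3), is again a
  smaller model of the reduct.  Conversely, as these equivalences determine \<open>P\<close>, \<open>P\<^sub>\<star>\<close> and
  \<open>P\<^sub>\<star>\<^sub>\<star>\<close> from \<open>D\<close>, \<open>P\<^sub>t\<close> and \<open>P\<^sub>f\<close>, a smaller model of the reduct is a competitor of the
  circumscription, and minimality in \<open>P\<^sub>t\<close>, \<open>P\<^sub>f\<close> forces it to coincide with \<open>I\<close>.
\<close>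

lemma eval_ren: "eval J B v (ren f F) \<longleftrightarrow> eval (\<lambda>r. J (f r)) B v F"
  by (induction F arbitrary: v) auto

lemma holds_ren: "holds J B (ren f F) \<longleftrightarrow> holds (\<lambda>r. J (f r)) B F"
  by (simp add: holds_def eval_ren)

lemma eval_conj_list: "eval J B v (conj_list Fs) \<longleftrightarrow> (\<forall>F\<in>set Fs. eval J B v F)"
  by (induction Fs rule: conj_list.induct) (auto simp: Top_def)

lemma eval_disj_list: "eval J B v (disj_list Fs) \<longleftrightarrow> (\<exists>F\<in>set Fs. eval J B v F)"
  by (induction Fs rule: disj_list.induct) auto

lemma eval_circ_conj_list: "eval J B v (circ (conj_list Fs)) \<longleftrightarrow> (\<forall>F\<in>set Fs. eval J B v (circ F))"
  by (induction Fs rule: conj_list.induct) (auto simp: Top_def)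

lemma eval_circ_disj_list: "eval J B v (circ (disj_list Fs)) \<longleftrightarrow> (\<exists>F\<in>set Fs. eval J B v (circ F))"
  by (induction Fs rule: disj_list.induct) auto

lemma holds_Conj: "holds J B (Conj F G) \<longleftrightarrow> holds J B F \<and> holds J B G"
  by (auto simp: holds_def)

lemma holds_conj_list: "holds J B (conj_list Fs) \<longleftrightarrow> (\<forall>F\<in>set Fs. holds J B F)"
  by (auto simp: holds_def eval_conj_list)

lemma holds_circ_conj_list: "holds J B (circ (conj_list Fs)) \<longleftrightarrow> (\<forall>F\<in>set Fs. holds J B (circ F))"
  by (auto simp: holds_def eval_circ_conj_list)

lemma override_on_collapse:
  "override_on (v(x := u x)) u L = u" if "u = override_on (v(x := a)) w L"
  using that by (auto simp: override_on_def fun_eq_iff)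

lemma eval_foldr_All:
  "eval J B v (foldr All l F) \<longleftrightarrow> (\<forall>w. eval J B (override_on v w (set l)) F)"
proof (induction l arbitrary: v)
  case (Cons x l)
  show ?case
    unfolding foldr.simps comp_def eval.simps Cons set_simps override_on_insert'
    by (metis override_on_collapse)
qed simp

lemma eval_foldr_Ex:
  "eval J B v (foldr Ex l F) \<longleftrightarrow> (\<exists>w. eval J B (override_on v w (set l)) F)"
proof (induction l arbitrary: v)
  case (Cons x l)
  show ?case
    unfolding foldr.simps comp_def eval.simps Cons set_simps override_on_insert'
    by (metis override_on_collapse)
qed simp

lemma holds_foldr_All: "holds J B (foldr All l F) \<longleftrightarrow> holds J B F"
  unfolding holds_def eval_foldr_All
proof (intro iffI allI)
  fix v
  assume "\<forall>v w. eval J B (override_on v w (set l)) F"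
  then have "eval J B (override_on v v (set l)) F" by blast
  then show "eval J B v F" by (simp add: override_on_def)
qed simp

lemma holds_univ_close: "holds J B (univ_close F) \<longleftrightarrow> holds J B F"
  by (simp add: univ_close_def holds_foldr_All)

lemma circ_foldr_All: "circ (foldr All l F) = foldr All l (circ F)"
  by (induction l) auto

lemma holds_circ_univ_close: "holds J B (circ (univ_close F)) \<longleftrightarrow> holds J B (circ F)"
  by (simp add: univ_close_def circ_foldr_All holds_foldr_All)

lemma tval_cong: "(\<And>i. i \<in> tvars t \<Longrightarrow> v i = w i) \<Longrightarrow> tval v t = tval w t"
  by (cases t) auto

lemma map_tval_cong:
  "(\<And>i. i \<in> \<Union> (tvars ` set ts) \<Longrightarrow> v i = w i) \<Longrightarrow> map (tval v) ts = map (tval w) ts"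
  by (intro map_cong refl tval_cong) blast

lemma eval_cong:
  "(\<And>i. i \<in> fv F \<Longrightarrow> v i = w i) \<Longrightarrow> eval J B v F \<longleftrightarrow> eval J B w F"
proof (induction F arbitrary: v w)
  case (Atom P ts)
  then show ?case using map_tval_cong[of ts v w] by (simp only: eval.simps fv.simps)
next
  case (Eq t u)
  then show ?case using tval_cong[of t v w] tval_cong[of u v w] by simp
next
  case (BI b ts)
  then show ?case using map_tval_cong[of ts v w] by (simp only: eval.simps fv.simps)
next
  case (Conj F G)
  have "eval J B v F \<longleftrightarrow> eval J B w F" "eval J B v G \<longleftrightarrow> eval J B w G"
    by (rule Conj.IH(1), use Conj.prems in simp) (rule Conj.IH(2), use Conj.prems in simp)
  then show ?case by simp
next
  case (Disj F G)
  have "eval J B v F \<longleftrightarrow> eval J B w F" "eval J B v G \<longleftrightarrow> eval J B w G"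
    by (rule Disj.IH(1), use Disj.prems in simp) (rule Disj.IH(2), use Disj.prems in simp)
  then show ?case by simp
next
  case (Imp F G)
  have "eval J B v F \<longleftrightarrow> eval J B w F" "eval J B v G \<longleftrightarrow> eval J B w G"
    by (rule Imp.IH(1), use Imp.prems in simp) (rule Imp.IH(2), use Imp.prems in simp)
  then show ?case by simp
next
  case (All x F)
  have "eval J B (v(x := a)) F \<longleftrightarrow> eval J B (w(x := a)) F" for a
    by (rule All.IH) (use All.prems in auto)
  then show ?case by simp
next
  case (Ex x F)
  have "eval J B (v(x := a)) F \<longleftrightarrow> eval J B (w(x := a)) F" for a
    by (rule Ex.IH) (use Ex.prems in auto)
  then show ?case by simp
qed simp

lemma eval_nth_map_upt:
  assumes "fv F \<subseteq> {..<k}"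
  shows "eval J B (\<lambda>i. map v [0..<k] ! i) F \<longleftrightarrow> eval J B v F"
  using assms by (intro eval_cong) auto

lemma all_valuations_tuple:
  assumes "fv F \<subseteq> {..<k}"
  shows "(\<forall>v. eval J B v F) \<longleftrightarrow> (\<forall>t. length t = k \<longrightarrow> eval J B (\<lambda>i. t ! i) F)"
proof
  assume "\<forall>t. length t = k \<longrightarrow> eval J B (\<lambda>i. t ! i) F"
  then show "\<forall>v. eval J B v F"
    using eval_nth_map_upt[OF assms] by (metis diff_zero length_map length_upt)
qed blast

lemma ex_valuations_tuple:
  assumes "fv F \<subseteq> {..<k}"
  shows "(\<exists>v. eval J B v F) \<longleftrightarrow> (\<exists>t. length t = k \<and> eval J B (\<lambda>i. t ! i) F)"
  using all_valuations_tuple[of "Imp F Bot" k J B] assms by (simp, blast)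

lemma eval_override_on_upt:
  assumes "fv F \<subseteq> {..<k}"
  shows "eval J B (override_on v w {0..<k}) F \<longleftrightarrow> eval J B w F"
  using assms by (intro eval_cong) auto

lemma holds_univ_close_tuple:
  assumes "fv F \<subseteq> {..<k}"
  shows "holds J B (univ_close F) \<longleftrightarrow> (\<forall>t. length t = k \<longrightarrow> eval J B (\<lambda>i. t ! i) F)"
  unfolding holds_univ_close unfolding holds_def using all_valuations_tuple[OF assms] .

lemma eval_all_tuple:
  assumes "fv F \<subseteq> {..<k}"
  shows "eval J B v (all_tuple k F) \<longleftrightarrow> (\<forall>t. length t = k \<longrightarrow> eval J B (\<lambda>i. t ! i) F)"
  by (simp add: all_tuple_def eval_foldr_All eval_override_on_upt[OF assms] all_valuations_tuple[OF assms])

lemma eval_ex_tuple: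
  assumes "fv F \<subseteq> {..<k}"
  shows "eval J B v (ex_tuple k F) \<longleftrightarrow> (\<exists>t. length t = k \<and> eval J B (\<lambda>i. t ! i) F)"
  by (simp add: ex_tuple_def eval_foldr_Ex eval_override_on_upt[OF assms] ex_valuations_tuple[OF assms])

lemma map_tval_vs [simp]: "map (tval v) (vs x) = map v x"
  by (simp add: vs_def)

lemma map_tval_xs [simp]: "map (tval v) (xs k) = map v [0..<k]"
  by (simp add: xs_def)

lemma map_nth_upt [simp]: "length t = k \<Longrightarrow> map (\<lambda>i. t ! i) [0..<k] = t"
  using map_nth[of t] by simp

lemma tvars_xs [simp]: "\<Union> (tvars ` set (xs k)) = {..<k}"
  by (auto simp: xs_def)

lemma fv_ren [simp]: "fv (ren f F) = fv F"
  by (induction F) auto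

lemma fv_circ [simp]: "fv (circ F) = fv F"
  by (induction F) auto

lemma holds_circ_univ_close_tuple:
  assumes "fv F \<subseteq> {..<k}"
  shows "holds J B (circ (univ_close F)) \<longleftrightarrow> (\<forall>t. length t = k \<longrightarrow> eval J B (\<lambda>i. t ! i) (circ F))"
  using holds_univ_close_tuple[of "circ F" k J B] assms
  by (simp add: holds_circ_univ_close holds_univ_close)

lemma fv_conj_list [simp]: "fv (conj_list Fs) = \<Union> (fv ` set Fs)"
  by (induction Fs rule: conj_list.induct) (auto simp: Top_def)

lemma fv_disj_list [simp]: "fv (disj_list Fs) = \<Union> (fv ` set Fs)"
  by (induction Fs rule: disj_list.induct) auto

lemma holds_conj_list_append:
  "holds J B (conj_list (Fs @ Gs)) \<longleftrightarrow> holds J B (conj_list Fs) \<and> holds J B (conj_list Gs)"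
  by (auto simp: holds_conj_list)

lemma holds_circ_conj_list_append:
  "holds J B (circ (conj_list (Fs @ Gs))) \<longleftrightarrow> holds J B (circ (conj_list Fs)) \<and> holds J B (circ (conj_list Gs))"
  by (auto simp: holds_circ_conj_list)

lemma ball_filter_map: "(\<forall>F\<in>set [f q. q \<leftarrow> qs, P q]. G F) \<longleftrightarrow> (\<forall>q\<in>set qs. P q \<longrightarrow> G (f q))"
  by (induction qs) auto

lemma bex_filter_map: "(\<exists>F\<in>set [f q. q \<leftarrow> qs, P q]. G F) \<longleftrightarrow> (\<exists>q\<in>set qs. P q \<and> G (f q))"
  by (induction qs) auto

lemma case_sum_if_Inr_Inl: "(\<lambda>r. case_sum I Z (if r \<in> A then Inr r else Inl r)) = override_on I Z A"
  by (auto simp: override_on_def)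

definition le_on :: "('r \<Rightarrow> nat) \<Rightarrow> 'r set \<Rightarrow> ('r \<Rightarrow> 'c list \<Rightarrow> bool) \<Rightarrow> ('r \<Rightarrow> 'c list \<Rightarrow> bool) \<Rightarrow> bool" where
  "le_on ar R X I \<longleftrightarrow> (\<forall>p\<in>R. \<forall>t. length t = ar p \<longrightarrow> X p t \<longrightarrow> I p t)"

definition agree_on :: "('r \<Rightarrow> nat) \<Rightarrow> 'r set \<Rightarrow> ('r \<Rightarrow> 'c list \<Rightarrow> bool) \<Rightarrow> ('r \<Rightarrow> 'c list \<Rightarrow> bool) \<Rightarrow> bool" where
  "agree_on ar R X I \<longleftrightarrow> (\<forall>p\<in>R. \<forall>t. length t = ar p \<longrightarrow> X p t = I p t)"

lemma holds_le_fm: "holds (case_sum I X) B (le_fm ar ps) \<longleftrightarrow> le_on ar (set ps) X I"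
proof -
  have "eval (case_sum I X) B v (all_tuple k (Imp (Atom (Inr p) (xs k)) (Atom (Inl p) (xs k)))) \<longleftrightarrow>
      (\<forall>t. length t = k \<longrightarrow> X p t \<longrightarrow> I p t)" for v p k
    by (simp add: eval_all_tuple[of _ k])
  then show ?thesis
    by (simp add: holds_def le_fm_def le_on_def eval_conj_list)
qed

lemma eval_eq_fm: "eval (case_sum I X) B v (eq_fm ar ps) \<longleftrightarrow> agree_on ar (set ps) X I"
proof -
  have "eval (case_sum I X) B v (all_tuple k (Iff (Atom (Inr p) (xs k)) (Atom (Inl p) (xs k)))) \<longleftrightarrow>
      (\<forall>t. length t = k \<longrightarrow> X p t = I p t)" for v p k
    by (auto simp: eval_all_tuple[of _ k] Iff_def)
  then show ?thesis
    by (simp add: eq_fm_def agree_on_def eval_conj_list)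
qed

lemma holds_less_fm:
  "holds (case_sum I X) B (less_fm ar ps) \<longleftrightarrow> le_on ar (set ps) X I \<and> \<not> agree_on ar (set ps) X I"
proof -
  have "eval (case_sum I X) B v (ex_tuple k (Conj (Atom (Inl p) (xs k)) (Neg (Atom (Inr p) (xs k))))) \<longleftrightarrow>
      (\<exists>t. length t = k \<and> I p t \<and> \<not> X p t)" for v p k
    by (simp add: eval_ex_tuple[of _ k] Neg_def cong: conj_cong)
  then have "holds (case_sum I X) B (less_fm ar ps) \<longleftrightarrow>
      le_on ar (set ps) X I \<and> (\<exists>p\<in>set ps. \<exists>t. length t = ar p \<and> I p t \<and> \<not> X p t)"
    using holds_le_fm[of I X B ar ps] by (simp add: less_fm_def holds_def eval_disj_list)
  then show ?thesis
    by (auto simp: le_on_def agree_on_def)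
qed

lemma Circ_holds_iff:
  "Circ_holds ar B I Sg Ps Qs \<longleftrightarrow> holds I B Sg \<and>
     (\<forall>Z. le_on ar (set Ps) Z I \<longrightarrow> holds (override_on I Z (set Ps \<union> set Qs)) B Sg
        \<longrightarrow> agree_on ar (set Ps) Z I)"
  unfolding Circ_holds_def holds_Conj holds_ren case_sum_if_Inr_Inl holds_le_fm
  by (auto simp: holds_def Neg_def eval_eq_fm)

section \<open>The rules of the repair program\<close>

fun batom_sat :: "('b \<Rightarrow> 'c list \<Rightarrow> bool) \<Rightarrow> (nat \<Rightarrow> 'c) \<Rightarrow> ('b, 'c) batom \<Rightarrow> bool" where
  "batom_sat B v (BEq t u) \<longleftrightarrow> tval v t = tval v u"
| "batom_sat B v (BRel b ts) \<longleftrightarrow> B b (map (tval v) ts)"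

definition lit_sat :: "('b \<Rightarrow> 'c list \<Rightarrow> bool) \<Rightarrow> (nat \<Rightarrow> 'c) \<Rightarrow> bool \<times> ('b, 'c) batom \<Rightarrow> bool" where
  "lit_sat B v l \<longleftrightarrow> (fst l \<longleftrightarrow> batom_sat B v (snd l))"

lemma eval_batom_fm [simp]: "eval J B v (batom_fm a) \<longleftrightarrow> batom_sat B v a"
  by (cases a) auto

lemma circ_batom_fm [simp]: "circ (batom_fm a) = batom_fm a"
  by (cases a) auto

lemma ren_batom_fm [simp]: "ren f (batom_fm a) = batom_fm a"
  by (cases a) auto

lemma eval_bneg [simp]: "eval J B v (bneg l) \<longleftrightarrow> \<not> lit_sat B v l"
  by (cases l; cases "fst l") (auto simp: lit_sat_def Neg_def)

lemma eval_circ_bneg [simp]: "eval J B v (circ (bneg l)) \<longleftrightarrow> \<not> lit_sat B v l"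
  by (cases l; cases "fst l") (auto simp: lit_sat_def Neg_def)

text \<open>Negated atoms are evaluated in \<open>K\<close>: for \<open>K = J\<close> this is the rule itself, and the
  \<open>X\<close>-half of \<open>\<psi>\<^sup>\<circ>\<close> at \<open>(I, X)\<close> is the rule for \<open>J = X\<close>, \<open>K = X \<squnion> I\<close>.\<close>

definition rule2_sat :: "('b \<Rightarrow> 'c list \<Rightarrow> bool) \<Rightarrow> ('p rp \<Rightarrow> 'c list \<Rightarrow> bool)
    \<Rightarrow> ('p rp \<Rightarrow> 'c list \<Rightarrow> bool) \<Rightarrow> ('p, 'b, 'c) ucon \<Rightarrow> bool list \<Rightarrow> bool" where
  "rule2_sat B J K c bs \<longleftrightarrow> (\<forall>v.
     (\<forall>(P, x)\<in>set (ante c). J (PS P) (map v x)) \<and>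
     (\<forall>((Q, y), b)\<in>set (zip (cons c) bs). if b then J (PF Q) (map v y) else \<not> K (Orig Q) (map v y)) \<and>
     (\<forall>l\<in>set (phi c). \<not> lit_sat B v l)
     \<longrightarrow> (\<exists>(P, x)\<in>set (ante c). J (PF P) (map v x)) \<or> (\<exists>(Q, y)\<in>set (cons c). J (PT Q) (map v y)))"

lemma holds_rule2: "holds J B (rule2 c bs) \<longleftrightarrow> rule2_sat B J J c bs"
  unfolding rule2_def Let_def holds_univ_close
  unfolding holds_def rule2_sat_def
  by (simp only: eval.simps eval_conj_list eval_disj_list set_append ball_Un bex_Un ball_filter_map)
     (auto simp: Neg_def split_beta)

lemma holds_circ_rule2:
  "holds (case_sum I X) B (circ (rule2 c bs)) \<longleftrightarrow>
     rule2_sat B X (\<lambda>p t. X p t \<or> I p t) c bs \<and> rule2_sat B I I c bs"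
  unfolding rule2_def Let_def holds_circ_univ_close
  unfolding holds_def rule2_sat_def
  by (simp only: circ.simps eval.simps eval_circ_conj_list eval_circ_disj_list eval_ren
      eval_conj_list eval_disj_list set_append ball_Un bex_Un ball_filter_map)
     (auto simp: Neg_def eval_ren split_beta)

definition facts_sat :: "('p rp \<Rightarrow> 'c list \<Rightarrow> bool) \<Rightarrow> ('p \<times> 'c list) list \<Rightarrow> bool" where
  "facts_sat J D \<longleftrightarrow> (\<forall>(P, t)\<in>set D. J (Orig P) t)"

definition rules2_sat :: "('b \<Rightarrow> 'c list \<Rightarrow> bool) \<Rightarrow> ('p rp \<Rightarrow> 'c list \<Rightarrow> bool)
    \<Rightarrow> ('p rp \<Rightarrow> 'c list \<Rightarrow> bool) \<Rightarrow> ('p, 'b, 'c) ucon list \<Rightarrow> bool" where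
  "rules2_sat B J K IC \<longleftrightarrow>
     (\<forall>c\<in>set IC. \<forall>bs\<in>set (List.n_lists (length (cons c)) [True, False]). rule2_sat B J K c bs)"

definition rules3_sat :: "('p \<Rightarrow> nat) \<Rightarrow> 'p list \<Rightarrow> ('p rp \<Rightarrow> 'c list \<Rightarrow> bool) \<Rightarrow> bool" where
  "rules3_sat ar S J \<longleftrightarrow>
     (\<forall>P\<in>set S. \<forall>t. length t = ar P \<longrightarrow> J (Orig P) t \<or> J (PT P) t \<longrightarrow> J (PS P) t)"

definition rules4_sat :: "('p \<Rightarrow> nat) \<Rightarrow> 'p list \<Rightarrow> ('p rp \<Rightarrow> 'c list \<Rightarrow> bool)
    \<Rightarrow> ('p rp \<Rightarrow> 'c list \<Rightarrow> bool) \<Rightarrow> bool" where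
  "rules4_sat ar S J K \<longleftrightarrow>
     (\<forall>P\<in>set S. \<forall>t. length t = ar P \<longrightarrow> J (PS P) t \<and> \<not> K (PF P) t \<longrightarrow> J (PSS P) t)"

definition rules5_sat :: "('p \<Rightarrow> nat) \<Rightarrow> 'p list \<Rightarrow> ('p rp \<Rightarrow> 'c list \<Rightarrow> bool) \<Rightarrow> bool" where
  "rules5_sat ar S J \<longleftrightarrow> (\<forall>P\<in>set S. \<forall>t. length t = ar P \<longrightarrow> \<not> (J (PT P) t \<and> J (PF P) t))"

definition theta_sat :: "('p \<Rightarrow> nat) \<Rightarrow> 'p list \<Rightarrow> ('p, 'b, 'c) ucon list \<Rightarrow> ('p \<times> 'c list) list
    \<Rightarrow> ('b \<Rightarrow> 'c list \<Rightarrow> bool) \<Rightarrow> ('p rp \<Rightarrow> 'c list \<Rightarrow> bool) \<Rightarrow> ('p rp \<Rightarrow> 'c list \<Rightarrow> bool) \<Rightarrow> bool" where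
  "theta_sat ar S IC D B J K \<longleftrightarrow> facts_sat J D \<and> rules2_sat B J K IC \<and> rules3_sat ar S J"

definition prog_sat :: "('p \<Rightarrow> nat) \<Rightarrow> 'p list \<Rightarrow> ('p, 'b, 'c) ucon list \<Rightarrow> ('p \<times> 'c list) list
    \<Rightarrow> ('b \<Rightarrow> 'c list \<Rightarrow> bool) \<Rightarrow> ('p rp \<Rightarrow> 'c list \<Rightarrow> bool) \<Rightarrow> ('p rp \<Rightarrow> 'c list \<Rightarrow> bool) \<Rightarrow> bool" where
  "prog_sat ar S IC D B J K \<longleftrightarrow>
     theta_sat ar S IC D B J K \<and> rules4_sat ar S J K \<and> rules5_sat ar S J"

lemma holds_facts: "holds J B (conj_list (facts D)) \<longleftrightarrow> facts_sat J D"
  unfolding holds_conj_list by (auto simp: facts_def facts_sat_def holds_def comp_def)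

lemma holds_circ_facts: "holds (case_sum I X) B (circ (conj_list (facts D))) \<longleftrightarrow> facts_sat X D"
  unfolding holds_circ_conj_list by (auto simp: facts_def facts_sat_def holds_def comp_def)

lemma holds_rules2: "holds J B (conj_list (rules2 IC)) \<longleftrightarrow> rules2_sat B J J IC"
  by (simp add: holds_conj_list rules2_def rules2_sat_def holds_rule2)

lemma holds_circ_rules2:
  "holds (case_sum I X) B (circ (conj_list (rules2 IC))) \<longleftrightarrow>
     rules2_sat B X (\<lambda>p t. X p t \<or> I p t) IC \<and> rules2_sat B I I IC"
  by (simp add: holds_circ_conj_list rules2_def rules2_sat_def holds_circ_rule2) blast

lemma holds_rules3: "holds J B (conj_list (rules3 ar S)) \<longleftrightarrow> rules3_sat ar S J"
proof -
  have "holds J B (univ_close (Imp (conj_list [Atom p (xs k)]) (Atom q (xs k)))) \<longleftrightarrow>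
      (\<forall>t. length t = k \<longrightarrow> J p t \<longrightarrow> J q t)" for p q k
    by (simp add: holds_univ_close_tuple[of _ k])
  then show ?thesis
    by (auto simp: holds_conj_list rules3_def rules3_sat_def)
qed

lemma holds_circ_rules3:
  "holds (case_sum I X) B (circ (conj_list (rules3 ar S))) \<longleftrightarrow> rules3_sat ar S X \<and> rules3_sat ar S I"
proof -
  have "holds (case_sum I X) B (circ (univ_close (Imp (conj_list [Atom p (xs k)]) (Atom q (xs k))))) \<longleftrightarrow>
      (\<forall>t. length t = k \<longrightarrow> (X p t \<longrightarrow> X q t) \<and> (I p t \<longrightarrow> I q t))" for p q k
    by (simp add: holds_circ_univ_close_tuple[of _ k] eval_ren)
  then show ?thesis
    by (auto simp: holds_circ_conj_list rules3_def rules3_sat_def)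
qed

lemma holds_rules4: "holds J B (conj_list (rules4 ar S)) \<longleftrightarrow> rules4_sat ar S J J"
proof -
  have "holds J B (univ_close (Imp (conj_list [Atom p (xs k), Neg (Atom q (xs k))]) (Atom r (xs k)))) \<longleftrightarrow>
      (\<forall>t. length t = k \<longrightarrow> J p t \<and> \<not> J q t \<longrightarrow> J r t)" for p q r k
    by (simp add: holds_univ_close_tuple[of _ k] Neg_def)
  then show ?thesis
    by (auto simp: holds_conj_list rules4_def rules4_sat_def)
qed

lemma holds_circ_rules4:
  "holds (case_sum I X) B (circ (conj_list (rules4 ar S))) \<longleftrightarrow>
     rules4_sat ar S X (\<lambda>p t. X p t \<or> I p t) \<and> rules4_sat ar S I I"
proof -
  have "holds (case_sum I X) B
        (circ (univ_close (Imp (conj_list [Atom p (xs k), Neg (Atom q (xs k))]) (Atom r (xs k))))) \<longleftrightarrow>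
      (\<forall>t. length t = k \<longrightarrow> (X p t \<and> \<not> (X q t \<or> I q t) \<longrightarrow> X r t) \<and> (I p t \<and> \<not> I q t \<longrightarrow> I r t))"
    for p q r k
    by (simp add: holds_circ_univ_close_tuple[of _ k] eval_ren Neg_def)
  then show ?thesis
    by (auto simp: holds_circ_conj_list rules4_def rules4_sat_def)
qed

lemma holds_rules5: "holds J B (conj_list (rules5 ar S)) \<longleftrightarrow> rules5_sat ar S J"
proof -
  have "holds J B (univ_close (Neg (conj_list [Atom p (xs k), Atom q (xs k)]))) \<longleftrightarrow>
      (\<forall>t. length t = k \<longrightarrow> \<not> (J p t \<and> J q t))" for p q k
    by (simp add: holds_univ_close_tuple[of _ k] Neg_def)
  then show ?thesis
    by (auto simp: holds_conj_list rules5_def rules5_sat_def)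
qed

lemma holds_circ_rules5:
  "holds (case_sum I X) B (circ (conj_list (rules5 ar S))) \<longleftrightarrow> rules5_sat ar S X \<and> rules5_sat ar S I"
proof -
  have "holds (case_sum I X) B (circ (univ_close (Neg (conj_list [Atom p (xs k), Atom q (xs k)])))) \<longleftrightarrow>
      (\<forall>t. length t = k \<longrightarrow> \<not> (X p t \<and> X q t) \<and> \<not> (I p t \<and> I q t))" for p q k
    by (simp add: holds_circ_univ_close_tuple[of _ k] eval_ren Neg_def)
  then show ?thesis
    by (auto simp: holds_circ_conj_list rules5_def rules5_sat_def)
qed

lemma holds_Theta: "holds J B (Theta ar S IC D) \<longleftrightarrow> theta_sat ar S IC D B J J"
  by (simp only: Theta_def theta_sat_def holds_conj_list_append holds_facts holds_rules2 holds_rules3)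

lemma holds_psi: "holds J B (psi ar S IC D) \<longleftrightarrow> prog_sat ar S IC D B J J"
  by (simp only: psi_def prog_sat_def theta_sat_def holds_conj_list_append
      holds_facts holds_rules2 holds_rules3 holds_rules4 holds_rules5 conj_assoc)

lemma holds_circ_psi:
  assumes "prog_sat ar S IC D B I I"
  shows "holds (case_sum I X) B (circ (psi ar S IC D)) \<longleftrightarrow> prog_sat ar S IC D B X (\<lambda>p t. X p t \<or> I p t)"
  using assms
  unfolding psi_def prog_sat_def theta_sat_def holds_circ_conj_list_append
    holds_circ_facts holds_circ_rules2 holds_circ_rules3 holds_circ_rules4 holds_circ_rules5
  by blast

section \<open>Stable models and the right-hand side\<close>

definition stable_model :: "('p \<Rightarrow> nat) \<Rightarrow> 'p list \<Rightarrow> ('p, 'b, 'c) ucon list \<Rightarrow> ('p \<times> 'c list) list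
    \<Rightarrow> ('b \<Rightarrow> 'c list \<Rightarrow> bool) \<Rightarrow> ('p rp \<Rightarrow> 'c list \<Rightarrow> bool) \<Rightarrow> bool" where
  "stable_model ar S IC D B I \<longleftrightarrow> prog_sat ar S IC D B I I \<and>
     (\<forall>X. le_on (rar ar) (set (preds S)) X I \<longrightarrow> prog_sat ar S IC D B X (\<lambda>p t. X p t \<or> I p t)
        \<longrightarrow> agree_on (rar ar) (set (preds S)) X I)"

lemma Phi_holds_iff_stable_model: "Phi_holds ar S IC D B I \<longleftrightarrow> stable_model ar S IC D B I"
  unfolding Phi_holds_def stable_model_def holds_Conj holds_less_fm holds_psi
  by (auto simp: holds_circ_psi)

lemma holds_R_fm:
  assumes "wf_db ar S D"
  shows "holds I B (R_fm ar S D) \<longleftrightarrow>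
    (\<forall>P\<in>set S. \<forall>t. length t = ar P \<longrightarrow> (I (Orig P) t \<longleftrightarrow> (P, t) \<in> set D))"
proof -
  let ?E = "\<lambda>P. disj_list [conj_list (map (\<lambda>i. Eq (Var i) (Cst (snd f ! i))) [0..<ar P]). f \<leftarrow> D, fst f = P]"
  have domain_closure: "holds I B (All 0 (disj_list (map (\<lambda>c. Eq (Var 0) (Cst c)) Enum.enum)))"
    by (simp add: holds_def eval_disj_list enum_UNIV)
  have unique_names: "holds I B (conj_list [Neg (Eq (Cst c) (Cst d)). c \<leftarrow> Enum.enum, d \<leftarrow> Enum.enum, c \<noteq> d])"
    unfolding holds_conj_list by (auto simp: holds_def Neg_def)
  have eval_E: "eval I B (\<lambda>i. t ! i) (?E P) \<longleftrightarrow> (P, t) \<in> set D" if "length t = ar P" for P t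
  proof -
    have "eval I B (\<lambda>i. t ! i) (?E P) \<longleftrightarrow> (\<exists>f\<in>set D. fst f = P \<and> (\<forall>i\<in>{0..<ar P}. t ! i = snd f ! i))"
      by (simp only: eval_disj_list bex_filter_map eval_conj_list) simp
    also have "\<dots> \<longleftrightarrow> (\<exists>f\<in>set D. fst f = P \<and> t = snd f)"
      using assms that by (auto simp: wf_db_def list_eq_iff_nth_eq)
    also have "\<dots> \<longleftrightarrow> (P, t) \<in> set D"
      by force
    finally show ?thesis .
  qed
  have "holds I B (all_tuple (ar P) (Iff (Atom (Orig P) (xs (ar P))) (?E P))) \<longleftrightarrow>
      (\<forall>t. length t = ar P \<longrightarrow> (I (Orig P) t \<longleftrightarrow> (P, t) \<in> set D))" for P
  proof -
    have "fv (Iff (Atom (Orig P) (xs (ar P))) (?E P)) \<subseteq> {..<ar P}"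
      by (auto simp: Iff_def)
    then show ?thesis
      using eval_E by (auto simp: holds_def eval_all_tuple Iff_def)
  qed
  then show ?thesis
    by (simp only: R_fm_def holds_Conj domain_closure unique_names simp_thms) (simp add: holds_conj_list)
qed

definition completion_sat :: "('p \<Rightarrow> nat) \<Rightarrow> 'p list \<Rightarrow> ('p \<times> 'c list) list \<Rightarrow> ('p rp \<Rightarrow> 'c list \<Rightarrow> bool) \<Rightarrow> bool" where
  "completion_sat ar S D I \<longleftrightarrow> (\<forall>P\<in>set S. \<forall>t. length t = ar P \<longrightarrow>
     (I (Orig P) t \<longleftrightarrow> (P, t) \<in> set D) \<and>
     (I (Orig P) t \<or> I (PT P) t \<longleftrightarrow> I (PS P) t) \<and>
     (I (PS P) t \<and> \<not> I (PF P) t \<longleftrightarrow> I (PSS P) t) \<and>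
     \<not> (I (PT P) t \<and> I (PF P) t))"

definition circ_vars :: "'p list \<Rightarrow> 'p rp set" where
  "circ_vars S = (\<Union>P\<in>set S. {PT P, PF P, PS P})"

lemma override_on_circ_vars [simp]:
  "override_on I Z (circ_vars S) (Orig P) = I (Orig P)"
  "override_on I Z (circ_vars S) (PSS P) = I (PSS P)"
  "P \<in> set S \<Longrightarrow> override_on I Z (circ_vars S) (PT P) = Z (PT P)"
  "P \<in> set S \<Longrightarrow> override_on I Z (circ_vars S) (PF P) = Z (PF P)"
  "P \<in> set S \<Longrightarrow> override_on I Z (circ_vars S) (PS P) = Z (PS P)"
  by (auto simp: circ_vars_def)

definition theta_minimal :: "('p \<Rightarrow> nat) \<Rightarrow> 'p list \<Rightarrow> ('p, 'b, 'c) ucon list \<Rightarrow> ('p \<times> 'c list) list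
    \<Rightarrow> ('b \<Rightarrow> 'c list \<Rightarrow> bool) \<Rightarrow> ('p rp \<Rightarrow> 'c list \<Rightarrow> bool) \<Rightarrow> bool" where
  "theta_minimal ar S IC D B I \<longleftrightarrow>
     (\<forall>Z. le_on (rar ar) (set (concat (map (\<lambda>P. [PT P, PF P]) S))) Z I \<longrightarrow>
        theta_sat ar S IC D B (override_on I Z (circ_vars S)) (override_on I Z (circ_vars S)) \<longrightarrow>
        agree_on (rar ar) (set (concat (map (\<lambda>P. [PT P, PF P]) S))) Z I)"

lemma RHS_holds_iff:
  assumes "wf_db ar S D"
  shows "RHS_holds ar S IC D B I \<longleftrightarrow>
    completion_sat ar S D I \<and> theta_sat ar S IC D B I I \<and> theta_minimal ar S IC D B I"
proof -
  have E1: "holds I B (all_tuple k (Iff (Disj (Atom p (xs k)) (Atom q (xs k))) (Atom r (xs k)))) \<longleftrightarrow>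
      (\<forall>t. length t = k \<longrightarrow> (I p t \<or> I q t \<longleftrightarrow> I r t))" for p q r k
    by (auto simp: holds_def eval_all_tuple[of _ k] Iff_def)
  have E2: "holds I B (all_tuple k (Iff (Conj (Atom p (xs k)) (Neg (Atom q (xs k)))) (Atom r (xs k)))) \<longleftrightarrow>
      (\<forall>t. length t = k \<longrightarrow> (I p t \<and> \<not> I q t \<longleftrightarrow> I r t))" for p q r k
    by (auto simp: holds_def eval_all_tuple[of _ k] Iff_def Neg_def)
  have E3: "holds I B (all_tuple k (Neg (Conj (Atom p (xs k)) (Atom q (xs k))))) \<longleftrightarrow>
      (\<forall>t. length t = k \<longrightarrow> \<not> (I p t \<and> I q t))" for p q k
    by (auto simp: holds_def eval_all_tuple[of _ k] Neg_def)
  have "set (concat (map (\<lambda>P. [PT P, PF P]) S)) \<union> set (map PS S) = circ_vars S"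
    by (auto simp: circ_vars_def)
  then show ?thesis
    unfolding RHS_holds_def Circ_holds_iff holds_Conj holds_R_fm[OF assms] holds_Theta
      completion_sat_def theta_minimal_def
    by (auto simp: holds_conj_list E1 E2 E3)
qed

section \<open>Stable models versus circumscription\<close>

lemma rule2_sat_mono:
  assumes "rule2_sat B J K c bs"
    and "\<And>P x v. (P, x) \<in> set (ante c) \<union> set (cons c) \<Longrightarrow>
      (J' (PS P) (map v x) \<longrightarrow> J (PS P) (map v x)) \<and> (J' (PF P) (map v x) \<longleftrightarrow> J (PF P) (map v x)) \<and>
      (J (PT P) (map v x) \<longrightarrow> J' (PT P) (map v x)) \<and> (K (Orig P) (map v x) \<longrightarrow> K' (Orig P) (map v x))"
  shows "rule2_sat B J' K' c bs"
  unfolding rule2_sat_def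
proof (intro allI impI)
  fix v
  assume body: "(\<forall>(P, x)\<in>set (ante c). J' (PS P) (map v x)) \<and>
     (\<forall>((Q, y), b)\<in>set (zip (cons c) bs). if b then J' (PF Q) (map v y) else \<not> K' (Orig Q) (map v y)) \<and>
     (\<forall>l\<in>set (phi c). \<not> lit_sat B v l)"
  have "(\<forall>(P, x)\<in>set (ante c). J (PS P) (map v x)) \<and>
     (\<forall>((Q, y), b)\<in>set (zip (cons c) bs). if b then J (PF Q) (map v y) else \<not> K (Orig Q) (map v y)) \<and>
     (\<forall>l\<in>set (phi c). \<not> lit_sat B v l)"
    using body assms(2) by (fastforce dest: set_zip_leftD)
  then have "(\<exists>(P, x)\<in>set (ante c). J (PF P) (map v x)) \<or> (\<exists>(Q, y)\<in>set (cons c). J (PT Q) (map v y))"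
    using assms(1) unfolding rule2_sat_def by blast
  then show "(\<exists>(P, x)\<in>set (ante c). J' (PF P) (map v x)) \<or> (\<exists>(Q, y)\<in>set (cons c). J' (PT Q) (map v y))"
    using assms(2) by fastforce
qed

lemma rules2_sat_mono:
  assumes "wf_ic ar S IC" and "rules2_sat B J K IC"
    and "\<And>P t. P \<in> set S \<Longrightarrow> length t = ar P \<Longrightarrow>
      (J' (PS P) t \<longrightarrow> J (PS P) t) \<and> (J' (PF P) t \<longleftrightarrow> J (PF P) t) \<and>
      (J (PT P) t \<longrightarrow> J' (PT P) t) \<and> (K (Orig P) t \<longrightarrow> K' (Orig P) t)"
  shows "rules2_sat B J' K' IC"
  unfolding rules2_sat_def
proof (intro ballI)
  fix c bs
  assume c: "c \<in> set IC" and bs: "bs \<in> set (List.n_lists (length (cons c)) [True, False])"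
  have "P \<in> set S \<and> length (map v x) = ar P" if "(P, x) \<in> set (ante c) \<union> set (cons c)" for P x v
    using assms(1) c that unfolding wf_ic_def by (metis Un_iff fst_conv length_map set_append snd_conv)
  then show "rule2_sat B J' K' c bs"
    using assms(2,3) c bs unfolding rules2_sat_def by (blast intro: rule2_sat_mono)
qed

lemma ball_set_preds:
  "(\<forall>p\<in>set (preds S). Q p) \<longleftrightarrow> (\<forall>P\<in>set S. Q (Orig P) \<and> Q (PT P) \<and> Q (PF P) \<and> Q (PS P) \<and> Q (PSS P))"
  by (auto simp: preds_def)

lemma le_on_minimized:
  "le_on (rar ar) (set (concat (map (\<lambda>P. [PT P, PF P]) S))) Z I \<longleftrightarrow>
     (\<forall>P\<in>set S. \<forall>t. length t = ar P \<longrightarrow> (Z (PT P) t \<longrightarrow> I (PT P) t) \<and> (Z (PF P) t \<longrightarrow> I (PF P) t))"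
  by (auto simp: le_on_def rar_def)

lemma agree_on_minimized:
  "agree_on (rar ar) (set (concat (map (\<lambda>P. [PT P, PF P]) S))) Z I \<longleftrightarrow>
     (\<forall>P\<in>set S. \<forall>t. length t = ar P \<longrightarrow> Z (PT P) t = I (PT P) t \<and> Z (PF P) t = I (PF P) t)"
  by (auto simp: agree_on_def rar_def)

lemma stable_model_theta_sat: "stable_model ar S IC D B I \<Longrightarrow> theta_sat ar S IC D B I I"
  by (simp add: stable_model_def prog_sat_def)

lemma stable_model_drop_atom:
  fixes I :: "'p rp \<Rightarrow> 'c list \<Rightarrow> bool" and p :: "'p rp" and t :: "'c list"
  defines "X \<equiv> I(p := \<lambda>s. I p s \<and> s \<noteq> t)"
  assumes wf: "wf_ic ar S IC" and stable: "stable_model ar S IC D B I"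
    and p: "p \<in> {Orig P, PS P, PSS P}" and P: "P \<in> set S" and len: "length t = ar P" and "I p t"
  shows "\<not> (facts_sat X D \<and> rules3_sat ar S X \<and> rules4_sat ar S X I)"
proof
  assume X: "facts_sat X D \<and> rules3_sat ar S X \<and> rules4_sat ar S X I"
  have prog_I: "prog_sat ar S IC D B I I"
    using stable by (simp add: stable_model_def)
  have X_le: "X r s \<Longrightarrow> I r s" for r s
    by (simp add: X_def split: if_splits)
  have X_PT: "X (PT Q) = I (PT Q)" and X_PF: "X (PF Q) = I (PF Q)" for Q
    using p by (auto simp: X_def)
  have "rules2_sat B X I IC"
  proof (rule rules2_sat_mono[OF wf])
    show "rules2_sat B I I IC"
      using prog_I by (simp add: prog_sat_def theta_sat_def)
  qed (simp add: X_PT X_PF X_le)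
  moreover have "rules5_sat ar S X"
    using prog_I by (simp add: X_PT X_PF prog_sat_def rules5_sat_def)
  moreover have "(\<lambda>q s. X q s \<or> I q s) = I"
    using X_le by (auto simp: fun_eq_iff)
  ultimately have "prog_sat ar S IC D B X (\<lambda>q s. X q s \<or> I q s)"
    using X by (simp add: prog_sat_def theta_sat_def)
  moreover have "le_on (rar ar) (set (preds S)) X I"
    by (simp add: X_def le_on_def)
  ultimately have "agree_on (rar ar) (set (preds S)) X I"
    using stable unfolding stable_model_def by blast
  then have "X p t = I p t"
    using p P len unfolding agree_on_def by (auto simp: preds_def rar_def)
  then show False
    using \<open>I p t\<close> by (simp add: X_def)
qed

lemma stable_model_Orig_iff:
  assumes wf: "wf_ic ar S IC" and stable: "stable_model ar S IC D B I"
    and P: "P \<in> set S" and len: "length t = ar P"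
  shows "I (Orig P) t \<longleftrightarrow> (P, t) \<in> set D"
proof
  have facts: "facts_sat I D" and r3: "rules3_sat ar S I" and r4: "rules4_sat ar S I I"
    using stable by (simp_all add: stable_model_def prog_sat_def theta_sat_def)
  assume It: "I (Orig P) t"
  show "(P, t) \<in> set D"
  proof (rule ccontr)
    let ?X = "I(Orig P := \<lambda>s. I (Orig P) s \<and> s \<noteq> t)"
    assume "(P, t) \<notin> set D"
    then have "facts_sat ?X D"
      using facts by (auto simp: facts_sat_def)
    moreover have "rules3_sat ar S ?X" "rules4_sat ar S ?X I"
      using r3 r4 by (auto simp: rules3_sat_def rules4_sat_def)
    ultimately show False
      using stable_model_drop_atom[OF wf stable _ P len It] by simp
  qed
next
  assume "(P, t) \<in> set D"
  then show "I (Orig P) t"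
    using stable by (auto simp: stable_model_def prog_sat_def theta_sat_def facts_sat_def)
qed

lemma stable_model_PS_iff:
  assumes wf: "wf_ic ar S IC" and stable: "stable_model ar S IC D B I"
    and P: "P \<in> set S" and len: "length t = ar P"
  shows "I (Orig P) t \<or> I (PT P) t \<longleftrightarrow> I (PS P) t"
proof
  have facts: "facts_sat I D" and r3: "rules3_sat ar S I" and r4: "rules4_sat ar S I I"
    using stable by (simp_all add: stable_model_def prog_sat_def theta_sat_def)
  assume It: "I (PS P) t"
  show "I (Orig P) t \<or> I (PT P) t"
  proof (rule ccontr)
    let ?X = "I(PS P := \<lambda>s. I (PS P) s \<and> s \<noteq> t)"
    assume "\<not> (I (Orig P) t \<or> I (PT P) t)"
    then have "rules3_sat ar S ?X"
      using r3 by (auto simp: rules3_sat_def)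
    moreover have "facts_sat ?X D" "rules4_sat ar S ?X I"
      using facts r4 by (auto simp: facts_sat_def rules4_sat_def)
    ultimately show False
      using stable_model_drop_atom[OF wf stable _ P len It] by simp
  qed
next
  assume "I (Orig P) t \<or> I (PT P) t"
  then show "I (PS P) t"
    using stable P len by (auto simp: stable_model_def prog_sat_def theta_sat_def rules3_sat_def)
qed

lemma stable_model_PSS_iff:
  assumes wf: "wf_ic ar S IC" and stable: "stable_model ar S IC D B I"
    and P: "P \<in> set S" and len: "length t = ar P"
  shows "I (PS P) t \<and> \<not> I (PF P) t \<longleftrightarrow> I (PSS P) t"
proof
  have facts: "facts_sat I D" and r3: "rules3_sat ar S I" and r4: "rules4_sat ar S I I"
    using stable by (simp_all add: stable_model_def prog_sat_def theta_sat_def)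
  assume It: "I (PSS P) t"
  show "I (PS P) t \<and> \<not> I (PF P) t"
  proof (rule ccontr)
    let ?X = "I(PSS P := \<lambda>s. I (PSS P) s \<and> s \<noteq> t)"
    assume "\<not> (I (PS P) t \<and> \<not> I (PF P) t)"
    then have "rules4_sat ar S ?X I"
      using r4 by (auto simp: rules4_sat_def)
    moreover have "facts_sat ?X D" "rules3_sat ar S ?X"
      using facts r3 by (auto simp: facts_sat_def rules3_sat_def)
    ultimately show False
      using stable_model_drop_atom[OF wf stable _ P len It] by simp
  qed
next
  assume "I (PS P) t \<and> \<not> I (PF P) t"
  then show "I (PSS P) t"
    using stable P len by (auto simp: stable_model_def prog_sat_def rules4_sat_def)
qed

lemma stable_model_completion_sat:
  assumes wf: "wf_ic ar S IC" and stable: "stable_model ar S IC D B I"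
  shows "completion_sat ar S D I"
proof -
  have "rules5_sat ar S I"
    using stable by (simp add: stable_model_def prog_sat_def)
  then show ?thesis
    using stable_model_Orig_iff[OF assms] stable_model_PS_iff[OF assms] stable_model_PSS_iff[OF assms]
    by (simp add: completion_sat_def rules5_sat_def)
qed

text \<open>From a competitor \<open>Z\<close> of the circumscription: \<open>P\<^sub>t\<close>, \<open>P\<^sub>f\<close> cut down below \<open>I\<close>, and \<open>P\<^sub>\<star>\<close>
  recomputed from \<open>P\<close> and \<open>P\<^sub>t\<close> by rule (3), also below \<open>I\<close>.\<close>

definition reduct_witness :: "('p rp \<Rightarrow> 'c list \<Rightarrow> bool) \<Rightarrow> ('p rp \<Rightarrow> 'c list \<Rightarrow> bool) \<Rightarrow> 'p rp \<Rightarrow> 'c list \<Rightarrow> bool" where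
  "reduct_witness I Z r = (case r of
      Orig q \<Rightarrow> I r
    | PT q \<Rightarrow> (\<lambda>s. Z r s \<and> I r s)
    | PF q \<Rightarrow> (\<lambda>s. Z r s \<and> I r s)
    | PS q \<Rightarrow> (\<lambda>s. (I (Orig q) s \<or> Z (PT q) s) \<and> I r s)
    | PSS q \<Rightarrow> I r)"

lemma reduct_witness_simps [simp]:
  "reduct_witness I Z (Orig q) = I (Orig q)"
  "reduct_witness I Z (PT q) s \<longleftrightarrow> Z (PT q) s \<and> I (PT q) s"
  "reduct_witness I Z (PF q) s \<longleftrightarrow> Z (PF q) s \<and> I (PF q) s"
  "reduct_witness I Z (PS q) s \<longleftrightarrow> (I (Orig q) s \<or> Z (PT q) s) \<and> I (PS q) s"
  "reduct_witness I Z (PSS q) = I (PSS q)"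
  by (simp_all add: reduct_witness_def)

lemma reduct_witness_le: "reduct_witness I Z r s \<Longrightarrow> I r s"
  by (cases r) simp_all

lemma prog_sat_reduct_witness:
  assumes wf: "wf_ic ar S IC" and prog_I: "prog_sat ar S IC D B I I"
    and leZ: "le_on (rar ar) (set (concat (map (\<lambda>P. [PT P, PF P]) S))) Z I"
    and theta: "theta_sat ar S IC D B (override_on I Z (circ_vars S)) (override_on I Z (circ_vars S))"
  shows "prog_sat ar S IC D B (reduct_witness I Z) I"
proof -
  let ?H = "override_on I Z (circ_vars S)"
  have "rules2_sat B (reduct_witness I Z) I IC"
  proof (rule rules2_sat_mono[OF wf])
    show "rules2_sat B ?H ?H IC"
      using theta by (simp add: theta_sat_def)
  next
    fix Q and s :: "'c list"
    assume "Q \<in> set S" "length s = ar Q"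
    then show "(reduct_witness I Z (PS Q) s \<longrightarrow> ?H (PS Q) s) \<and>
        (reduct_witness I Z (PF Q) s \<longleftrightarrow> ?H (PF Q) s) \<and>
        (?H (PT Q) s \<longrightarrow> reduct_witness I Z (PT Q) s) \<and> (?H (Orig Q) s \<longrightarrow> I (Orig Q) s)"
      using theta leZ unfolding le_on_minimized by (auto simp: theta_sat_def rules3_sat_def)
  qed
  moreover have "facts_sat (reduct_witness I Z) D"
    using prog_I by (simp add: prog_sat_def theta_sat_def facts_sat_def)
  moreover have "rules3_sat ar S (reduct_witness I Z)"
    using prog_I by (auto simp: prog_sat_def theta_sat_def rules3_sat_def)
  moreover have "rules4_sat ar S (reduct_witness I Z) I" "rules5_sat ar S (reduct_witness I Z)"
    using prog_I by (auto simp: prog_sat_def rules4_sat_def rules5_sat_def)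
  ultimately show ?thesis
    by (simp add: prog_sat_def theta_sat_def)
qed

lemma stable_model_theta_minimal:
  assumes wf: "wf_ic ar S IC" and stable: "stable_model ar S IC D B I"
  shows "theta_minimal ar S IC D B I"
  unfolding theta_minimal_def
proof (intro allI impI)
  fix Z
  assume leZ: "le_on (rar ar) (set (concat (map (\<lambda>P. [PT P, PF P]) S))) Z I"
    and theta: "theta_sat ar S IC D B (override_on I Z (circ_vars S)) (override_on I Z (circ_vars S))"
  let ?X = "reduct_witness I Z"
  have "prog_sat ar S IC D B ?X I"
    using stable leZ theta by (intro prog_sat_reduct_witness[OF wf]) (simp_all add: stable_model_def)
  moreover have "(\<lambda>q s. ?X q s \<or> I q s) = I"
    using reduct_witness_le by (auto simp: fun_eq_iff)
  ultimately have "prog_sat ar S IC D B ?X (\<lambda>q s. ?X q s \<or> I q s)"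
    by simp
  moreover have "le_on (rar ar) (set (preds S)) ?X I"
    unfolding le_on_def by (blast intro: reduct_witness_le)
  ultimately have "agree_on (rar ar) (set (preds S)) ?X I"
    using stable unfolding stable_model_def by blast
  then show "agree_on (rar ar) (set (concat (map (\<lambda>P. [PT P, PF P]) S))) Z I"
    using leZ unfolding agree_on_minimized le_on_minimized by (auto simp: agree_on_def ball_set_preds rar_def)
qed

lemma theta_sat_override_on_circ_vars:
  assumes wf: "wf_ic ar S IC" and comp: "completion_sat ar S D I" and facts: "facts_sat I D"
    and le: "le_on (rar ar) (set (preds S)) X I"
    and prog_X: "prog_sat ar S IC D B X (\<lambda>p t. X p t \<or> I p t)"
  shows "theta_sat ar S IC D B (override_on I X (circ_vars S)) (override_on I X (circ_vars S))"
proof -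
  let ?H = "override_on I X (circ_vars S)"
  have "rules2_sat B ?H ?H IC"
  proof (rule rules2_sat_mono[OF wf])
    show "rules2_sat B X (\<lambda>p t. X p t \<or> I p t) IC"
      using prog_X by (simp add: prog_sat_def theta_sat_def)
  qed (use le in \<open>auto simp: le_on_def ball_set_preds rar_def\<close>)
  moreover have "rules3_sat ar S ?H"
    using comp prog_X
    by (auto simp: completion_sat_def prog_sat_def theta_sat_def facts_sat_def rules3_sat_def)
  ultimately show ?thesis
    using facts by (simp add: theta_sat_def facts_sat_def)
qed

lemma completion_sat_agree_on_preds:
  fixes X I :: "'p rp \<Rightarrow> 'c list \<Rightarrow> bool"
  assumes comp: "completion_sat ar S D I" and le: "le_on (rar ar) (set (preds S)) X I"
    and prog_X: "prog_sat ar S IC D B X (\<lambda>p t. X p t \<or> I p t)"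
    and agree: "agree_on (rar ar) (set (concat (map (\<lambda>P. [PT P, PF P]) S))) X I"
  shows "agree_on (rar ar) (set (preds S)) X I"
  unfolding agree_on_def ball_set_preds rar_def base.simps
proof (intro ballI allI impI conjI)
  fix P and t :: "'c list"
  assume P: "P \<in> set S" and len: "length t = ar P"
  have le_P: "X (p P) t \<Longrightarrow> I (p P) t" if "p \<in> {Orig, PT, PF, PS, PSS}" for p
    using le P len that by (auto simp: le_on_def ball_set_preds rar_def)
  have Orig: "X (Orig P) t \<longleftrightarrow> I (Orig P) t"
    using comp prog_X le_P[of Orig] P len
    by (auto simp: completion_sat_def prog_sat_def theta_sat_def facts_sat_def)
  moreover have T: "X (PT P) t \<longleftrightarrow> I (PT P) t" and F: "X (PF P) t \<longleftrightarrow> I (PF P) t"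
    using agree P len unfolding agree_on_minimized by simp_all
  moreover have PS: "X (PS P) t \<longleftrightarrow> I (PS P) t"
    using comp prog_X le_P[of PS] Orig T P len
    by (auto simp: completion_sat_def prog_sat_def theta_sat_def rules3_sat_def)
  moreover have "X (PSS P) t \<longleftrightarrow> I (PSS P) t"
    using comp prog_X le_P[of PSS] PS F P len
    by (auto simp: completion_sat_def prog_sat_def rules4_sat_def)
  ultimately show "X (Orig P) t = I (Orig P) t" "X (PT P) t = I (PT P) t" "X (PF P) t = I (PF P) t"
    "X (PS P) t = I (PS P) t" "X (PSS P) t = I (PSS P) t"
    by simp_all
qed

lemma completion_sat_theta_minimal_stable_model:
  assumes wf: "wf_ic ar S IC" and comp: "completion_sat ar S D I"
    and theta: "theta_sat ar S IC D B I I" and minimal: "theta_minimal ar S IC D B I"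
  shows "stable_model ar S IC D B I"
  unfolding stable_model_def
proof (intro conjI allI impI)
  show "prog_sat ar S IC D B I I"
    using comp theta by (auto simp: prog_sat_def completion_sat_def rules4_sat_def rules5_sat_def)
next
  fix X
  assume le: "le_on (rar ar) (set (preds S)) X I"
    and prog_X: "prog_sat ar S IC D B X (\<lambda>p t. X p t \<or> I p t)"
  have "theta_sat ar S IC D B (override_on I X (circ_vars S)) (override_on I X (circ_vars S))"
    using theta by (intro theta_sat_override_on_circ_vars[OF wf comp _ le prog_X]) (simp add: theta_sat_def)
  moreover have "le_on (rar ar) (set (concat (map (\<lambda>P. [PT P, PF P]) S))) X I"
    using le by (auto simp: le_on_def preds_def)
  ultimately have "agree_on (rar ar) (set (concat (map (\<lambda>P. [PT P, PF P]) S))) X I"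
    using minimal unfolding theta_minimal_def by blast
  then show "agree_on (rar ar) (set (preds S)) X I"
    using completion_sat_agree_on_preds[OF comp le prog_X] by blast
qed

theorem proposition2:
  fixes S :: "'p list" and ar :: "'p \<Rightarrow> nat"
    and IC :: "('p, 'b, 'c::enum) ucon list" and D :: "('p \<times> 'c list) list"
    and B :: "'b \<Rightarrow> 'c list \<Rightarrow> bool" and I :: "'p rp \<Rightarrow> 'c list \<Rightarrow> bool"
  assumes "wf_db ar S D" and "wf_ic ar S IC"
  shows "Phi_holds ar S IC D B I \<longleftrightarrow> RHS_holds ar S IC D B I"
proof -
  have "stable_model ar S IC D B I \<longleftrightarrow>
      completion_sat ar S D I \<and> theta_sat ar S IC D B I I \<and> theta_minimal ar S IC D B I"
    using stable_model_completion_sat[OF assms(2)] stable_model_theta_minimal[OF assms(2)]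
      completion_sat_theta_minimal_stable_model[OF assms(2)] stable_model_theta_sat
    by blast
  then show ?thesis
    by (simp add: Phi_holds_iff_stable_model RHS_holds_iff[OF assms(1)])
qed

end
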